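(* Let $\mathbf{A}\in\mathbb{K}[X]^{m\times m}$ be nonsingular, $\mathbf{s}\in\mathbb{Z}^m$, and $\sigma\in\mathbb{N}$ with $\sigma>\deg(\det\mathbf{A})$. Let $\pi$ be a permutation of $\{1,\dots,m\}$ such that $\hat{\mathbf{s}}=(s_{\pi(1)},\dots,s_{\pi(m)})$ is non-decreasing; define $\hat{\mathbf{t}}$ by $\hat t_1=0$ and, for $2\le i\le m$, $\hat t_i-\hat t_{i-1}=\sigma$ if $\hat s_i-\hat s_{i-1}\ge\sigma$ and $\hat t_i-\hat t_{i-1}=\hat s_i-\hat s_{i-1}$ otherwise; and let $\mathbf{t}=(\hat t_{\pi^{-1}(1)},\dots,\hat t_{\pi^{-1}(m)})$. Then $\mathbf{t}\in\mathbb{N}^m$, $\min(\mathbf{t})=0$, $\max(\mathbf{t})\le(m-1)\sigma$, $t_1+\cdots+t_m\le m^2\sigma/2$, and the $\mathbf{s}$-Popov form of $\mathbf{A}$ is also in $\mathbf{t}$-Popov form.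
   Context: For $\mathbf{s}\in\mathbb{Z}^m$ and nonzero $\mathbf{p}=[p_j]\in\mathbb{K}[X]^{1\times m}$, the $\mathbf{s}$-degree of $\mathbf{p}$ is $\max_j(\deg p_j+s_j)$ and its $\mathbf{s}$-pivot index is the largest $j$ attaining it, with $p_j$ its pivot entry. A nonsingular matrix is in $\mathbf{s}$-Popov form if its $\mathbf{s}$-pivot entries are monic and on its diagonal and in each column the nonpivot entries have degree less than the pivot entry. The $\mathbf{s}$-Popov form of $\mathbf{A}$ is the unique matrix in $\mathbf{s}$-Popov form that is left-unimodularly equivalent to $\mathbf{A}$. *)

theory Defs
  imports "Jordan_Normal_Form.Determinant" "HOL-Computational_Algebra.Polynomial"
    "HOL-Combinatorics.Permutations"
begin

(* Matrices are 0-indexed: rows/columns 0..<n. Shifts are functions nat => int. *)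

definition row_sdeg :: "(nat \<Rightarrow> int) \<Rightarrow> 'a::zero poly mat \<Rightarrow> nat \<Rightarrow> int" where
  "row_sdeg s P i = Max {int (degree (P $$ (i,j))) + s j | j. j < dim_col P \<and> P $$ (i,j) \<noteq> 0}"

definition row_spivot :: "(nat \<Rightarrow> int) \<Rightarrow> 'a::zero poly mat \<Rightarrow> nat \<Rightarrow> nat" where
  "row_spivot s P i = (GREATEST j. j < dim_col P \<and> P $$ (i,j) \<noteq> 0 \<and>
      int (degree (P $$ (i,j))) + s j = row_sdeg s P i)"

definition is_popov :: "(nat \<Rightarrow> int) \<Rightarrow> 'a::field poly mat \<Rightarrow> bool" where
  "is_popov s P \<longleftrightarrow> (\<exists>n. P \<in> carrier_mat n n \<and> det P \<noteq> 0 \<and>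
     (\<forall>i<n. (\<exists>j<n. P $$ (i,j) \<noteq> 0) \<and> row_spivot s P i = i \<and>
            lead_coeff (P $$ (i,i)) = 1 \<and>
            (\<forall>k<n. k \<noteq> i \<longrightarrow> P $$ (k,i) = 0 \<or> degree (P $$ (k,i)) < degree (P $$ (i,i)))))"

definition unimodular :: "'a::field poly mat \<Rightarrow> nat \<Rightarrow> bool" where
  "unimodular U n \<longleftrightarrow> U \<in> carrier_mat n n \<and> is_unit (det U)"

definition left_uni_equiv :: "'a::field poly mat \<Rightarrow> 'a poly mat \<Rightarrow> bool" where
  "left_uni_equiv P A \<longleftrightarrow> (\<exists>U. unimodular U (dim_row A) \<and> P = U * A)"

primrec tHat :: "(nat \<Rightarrow> int) \<Rightarrow> (nat \<Rightarrow> nat) \<Rightarrow> nat \<Rightarrow> nat \<Rightarrow> int" where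
  "tHat s p sg 0 = 0"
| "tHat s p sg (Suc i) = tHat s p sg i +
     (if s (p (Suc i)) - s (p i) \<ge> int sg then int sg else s (p (Suc i)) - s (p i))"

definition tShift :: "(nat \<Rightarrow> int) \<Rightarrow> (nat \<Rightarrow> nat) \<Rightarrow> nat \<Rightarrow> nat \<Rightarrow> int" where
  "tShift s p sg j = tHat s p sg (inv_into UNIV p j)"

end

theory Submission
  imports Defs
begin

text \<open>
  Along \<open>\<pi>\<close> the increments of \<open>t\<close> are those of \<open>s\<close> capped at \<open>\<sigma>\<close>, so for two columns
  \<open>i, j\<close> with \<open>\<pi>\<^sup>-\<^sup>1 i < \<pi>\<^sup>-\<^sup>1 j\<close> we have \<open>t\<^sub>j - t\<^sub>i \<le> s\<^sub>j - s\<^sub>i\<close>, while in the other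
  order either \<open>t\<^sub>i - t\<^sub>j = s\<^sub>i - s\<^sub>j\<close> or \<open>t\<^sub>i - t\<^sub>j \<ge> \<sigma>\<close>. In an \<open>s\<close>-Popov matrix \<open>P\<close> the
  diagonal degrees add up to at most \<open>deg det P = deg det A < \<sigma>\<close>, and every off-diagonal
  entry has smaller degree than the diagonal entry of its column. Hence replacing \<open>s\<close> by
  \<open>t\<close> can only strengthen the inequalities that make the diagonal entries the pivots, and
  where a shift difference is cut down to \<open>\<sigma>\<close> the small degrees keep the diagonal ahead.
\<close>

lemma permutes_eq_id_if_le:
  fixes p :: "'a::wellorder \<Rightarrow> 'a"
  assumes p: "p permutes S" and le: "\<And>k. k \<in> S \<Longrightarrow> p k \<le> k"
  shows "p = id"
proof -
  have "p i = i" for i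
  proof (induction i rule: less_induct)
    case (less i)
    show ?case
    proof (cases "i \<in> S")
      case False
      then show ?thesis using p by (simp add: permutes_not_in)
    next
      case True
      have "\<not> p i < i"
      proof
        assume lt: "p i < i"
        then have "p (p i) = p i" using less by simp
        then have "p i = i" using permutes_inj[OF p] by (meson injD)
        with lt show False by simp
      qed
      with le[OF True] show ?thesis by simp
    qed
  qed
  then show ?thesis by auto
qed

lemma sum_lessThan_of_nat_le_half_square: "(\<Sum>i<m. real i) \<le> real m ^ 2 / 2"
proof (induction m)
  case (Suc m)
  then show ?case by (simp add: power2_eq_square field_simps)
qed simp

lemma tHat_le_mult: "tHat s p \<sigma> i \<le> int i * int \<sigma>"
  by (induction i) (auto simp: algebra_simps)

lemma tHat_diff_bounds:
  assumes "\<And>i. i < b \<Longrightarrow> s (p i) \<le> s (p (Suc i))" and "a \<le> b"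
  shows "0 \<le> tHat s p \<sigma> b - tHat s p \<sigma> a"
    and "tHat s p \<sigma> b - tHat s p \<sigma> a \<le> s (p b) - s (p a)"
    and "tHat s p \<sigma> b - tHat s p \<sigma> a = s (p b) - s (p a) \<or>
         int \<sigma> \<le> tHat s p \<sigma> b - tHat s p \<sigma> a"
proof -
  define d where "d c = tHat s p \<sigma> c - tHat s p \<sigma> a" for c
  have "0 \<le> d b \<and> d b \<le> s (p b) - s (p a) \<and> (d b = s (p b) - s (p a) \<or> int \<sigma> \<le> d b)"
    (is "?P b")
    using assms
  proof (induction b)
    case (Suc b)
    show ?case
    proof (cases "a = Suc b")
      case False
      with Suc have "?P b" and "s (p b) \<le> s (p (Suc b))" by simp_all
      then show ?thesis by (auto simp: d_def algebra_simps)
    qed (simp add: d_def)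
  qed (simp add: d_def)
  then show "0 \<le> tHat s p \<sigma> b - tHat s p \<sigma> a"
    and "tHat s p \<sigma> b - tHat s p \<sigma> a \<le> s (p b) - s (p a)"
    and "tHat s p \<sigma> b - tHat s p \<sigma> a = s (p b) - s (p a) \<or>
         int \<sigma> \<le> tHat s p \<sigma> b - tHat s p \<sigma> a"
    by (auto simp: d_def)
qed

locale sorting_permutation =
  fixes m :: nat and s :: "nat \<Rightarrow> int" and \<pi> :: "nat \<Rightarrow> nat"
  assumes perm: "\<pi> permutes {..<m}"
    and sorted: "\<forall>i j. i \<le> j \<and> j < m \<longrightarrow> s (\<pi> i) \<le> s (\<pi> j)"
begin

lemma inv_perm_less: "j < m \<Longrightarrow> inv_into UNIV \<pi> j < m"
  using permutes_in_image[OF permutes_inv[OF perm]] by simp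

lemma tShift_eq_tHat: "tShift s \<pi> \<sigma> (\<pi> i) = tHat s \<pi> \<sigma> i"
  unfolding tShift_def using permutes_inverses(2)[OF perm] by simp

lemma tHat_nonneg: "i < m \<Longrightarrow> 0 \<le> tHat s \<pi> \<sigma> i"
  using tHat_diff_bounds(1)[of i s \<pi> 0 \<sigma>] sorted by simp

lemma tShift_nonneg: "j < m \<Longrightarrow> 0 \<le> tShift s \<pi> \<sigma> j"
  unfolding tShift_def using inv_perm_less tHat_nonneg by simp

lemma tShift_le_mult: "j < m \<Longrightarrow> tShift s \<pi> \<sigma> j \<le> (int m - 1) * int \<sigma>"
  unfolding tShift_def
  using tHat_le_mult[of s \<pi> \<sigma> "inv_into UNIV \<pi> j"] inv_perm_less[of j]
        mult_right_mono[of "int (inv_into UNIV \<pi> j)" "int m - 1" "int \<sigma>"]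
  by linarith

lemma Min_tShift: "0 < m \<Longrightarrow> Min {tShift s \<pi> \<sigma> j | j. j < m} = 0"
  using tShift_nonneg tShift_eq_tHat[where i = 0 and \<sigma> = \<sigma>] permutes_in_image[OF perm, of 0]
  by (intro Min_eqI) auto

lemma sum_tShift_le: "real_of_int (\<Sum>j<m. tShift s \<pi> \<sigma> j) \<le> real m ^ 2 * real \<sigma> / 2"
proof -
  have "(\<Sum>j<m. tShift s \<pi> \<sigma> j) = (\<Sum>i<m. tHat s \<pi> \<sigma> i)"
    using sum.permute[OF perm, of "tShift s \<pi> \<sigma>"] by (simp add: comp_def tShift_eq_tHat)
  then have "real_of_int (\<Sum>j<m. tShift s \<pi> \<sigma> j) = (\<Sum>i<m. real_of_int (tHat s \<pi> \<sigma> i))"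
    by simp
  also have "\<dots> \<le> (\<Sum>i<m. real i * real \<sigma>)"
    using tHat_le_mult[of s \<pi> \<sigma>] by (intro sum_mono) (metis of_int_le_iff of_int_mult of_int_of_nat_eq)
  also have "\<dots> \<le> real m ^ 2 * real \<sigma> / 2"
    using mult_right_mono[OF sum_lessThan_of_nat_le_half_square[of m], of "real \<sigma>"]
    by (simp add: sum_distrib_right)
  finally show ?thesis .
qed

lemma tShift_diff_cases:
  assumes "i < m" "j < m" "i \<noteq> j"
  shows "tShift s \<pi> \<sigma> j - tShift s \<pi> \<sigma> i \<le> s j - s i \<or>
         int \<sigma> \<le> tShift s \<pi> \<sigma> i - tShift s \<pi> \<sigma> j"
proof -
  define a b where "a = inv_into UNIV \<pi> i" and "b = inv_into UNIV \<pi> j"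
  have ab: "a < m" "b < m" "a \<noteq> b"
    using assms inv_perm_less permutes_inverses(1)[OF perm] unfolding a_def b_def by metis+
  have ij: "i = \<pi> a" "j = \<pi> b"
    unfolding a_def b_def using permutes_inverses(1)[OF perm] by simp_all
  have step: "\<And>c k. c < m \<Longrightarrow> k < c \<Longrightarrow> s (\<pi> k) \<le> s (\<pi> (Suc k))"
    using sorted by simp
  show ?thesis
  proof (cases "a < b")
    case True
    then have "tHat s \<pi> \<sigma> b - tHat s \<pi> \<sigma> a \<le> s (\<pi> b) - s (\<pi> a)"
      using tHat_diff_bounds(2)[where s = s and p = \<pi>, OF step[OF ab(2)]] by simp
    then show ?thesis unfolding ij tShift_eq_tHat by simp
  next
    case False
    then have "tHat s \<pi> \<sigma> a - tHat s \<pi> \<sigma> b = s (\<pi> a) - s (\<pi> b) \<or>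
               int \<sigma> \<le> tHat s \<pi> \<sigma> a - tHat s \<pi> \<sigma> b"
      using tHat_diff_bounds(3)[where s = s and p = \<pi>, OF step[OF ab(1)]] by simp
    then show ?thesis unfolding ij tShift_eq_tHat by auto
  qed
qed

end

lemma is_popov_carrier_iff:
  assumes "P \<in> carrier_mat n n"
  shows "is_popov s P \<longleftrightarrow> det P \<noteq> 0 \<and> (\<forall>i<n. (\<exists>j<n. P $$ (i,j) \<noteq> 0) \<and>
            row_spivot s P i = i \<and> lead_coeff (P $$ (i,i)) = 1 \<and>
            (\<forall>k<n. k \<noteq> i \<longrightarrow> P $$ (k,i) = 0 \<or> degree (P $$ (k,i)) < degree (P $$ (i,i))))"
  using assms unfolding is_popov_def by auto

lemma row_spivot_eq_diag_iff:
  assumes car: "P \<in> carrier_mat n n" and i: "i < n" and row: "\<exists>j<n. P $$ (i,j) \<noteq> 0"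
  shows "row_spivot s P i = i \<longleftrightarrow> P $$ (i,i) \<noteq> 0 \<and>
    (\<forall>j<n. P $$ (i,j) \<noteq> 0 \<longrightarrow> int (degree (P $$ (i,j))) + s j \<le> int (degree (P $$ (i,i))) + s i) \<and>
    (\<forall>j<n. i < j \<and> P $$ (i,j) \<noteq> 0 \<longrightarrow> int (degree (P $$ (i,j))) + s j < int (degree (P $$ (i,i))) + s i)"
    (is "_ \<longleftrightarrow> ?diag")
proof -
  define S where "S = {int (degree (P $$ (i,j))) + s j | j. j < n \<and> P $$ (i,j) \<noteq> 0}"
  define Q where "Q = (\<lambda>j. j < n \<and> P $$ (i,j) \<noteq> 0 \<and> int (degree (P $$ (i,j))) + s j = Max S)"
  have dc: "dim_col P = n" using car by simp
  have piv: "row_spivot s P i = (GREATEST j. Q j)"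
    unfolding row_spivot_def row_sdeg_def Q_def S_def dc ..
  have finS: "finite S" unfolding S_def by simp
  have Max_ge: "int (degree (P $$ (i,j))) + s j \<le> Max S" if "j < n" "P $$ (i,j) \<noteq> 0" for j
    using finS that by (intro Max_ge) (auto simp: S_def)
  have bnd: "Q j \<Longrightarrow> j \<le> n" for j unfolding Q_def by simp
  show ?thesis
  proof
    assume "row_spivot s P i = i"
    moreover obtain j0 where "Q j0"
      using Max_in[OF finS] row unfolding Q_def S_def by fastforce
    ultimately have Qi: "Q i" and Qle: "\<And>j. Q j \<Longrightarrow> j \<le> i"
      using GreatestI_nat[of Q j0 n] Greatest_le_nat[of Q _ n] bnd piv by auto
    show ?diag
      using Qi Max_ge Qle unfolding Q_def by (fastforce simp: not_le[symmetric])
  next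
    assume diag: ?diag
    then have "Max S = int (degree (P $$ (i,i))) + s i"
      using finS i unfolding S_def by (intro Max_eqI) auto
    then have "(GREATEST j. Q j) = i"
      using diag i unfolding Q_def by (intro Greatest_equality) (auto simp: not_less[symmetric])
    then show "row_spivot s P i = i" using piv by simp
  qed
qed

lemma is_popov_pivot_row:
  assumes pop: "is_popov s P" and car: "P \<in> carrier_mat n n" and i: "i < n"
  shows "P $$ (i,i) \<noteq> 0"
    and "\<And>j. j < n \<Longrightarrow> P $$ (i,j) \<noteq> 0 \<Longrightarrow>
           int (degree (P $$ (i,j))) + s j \<le> int (degree (P $$ (i,i))) + s i"
    and "\<And>j. j < n \<Longrightarrow> i < j \<Longrightarrow> P $$ (i,j) \<noteq> 0 \<Longrightarrow>
           int (degree (P $$ (i,j))) + s j < int (degree (P $$ (i,i))) + s i"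
  using row_spivot_eq_diag_iff[OF car i, of s] pop i
  unfolding is_popov_carrier_iff[OF car] by auto

text \<open>Only the identity permutation follows the pivots: any other one leaves some row \<open>k\<close>
  to the right of its pivot, where the \<open>s\<close>-degree drops strictly.\<close>

lemma is_popov_perm_term_degree_lt:
  assumes pop: "is_popov s P" and car: "P \<in> carrier_mat n n"
    and p: "p permutes {0..<n}" "p \<noteq> id"
    and nz: "\<And>i. i < n \<Longrightarrow> P $$ (i, p i) \<noteq> 0"
  shows "degree (\<Prod>i = 0..<n. P $$ (i, p i)) < (\<Sum>i = 0..<n. degree (P $$ (i,i)))"
proof -
  have pin: "\<And>i. i < n \<Longrightarrow> p i < n" using p(1) by (simp add: permutes_in_image)
  obtain k where k: "k < n" "k < p k" using permutes_eq_id_if_le[OF p(1)] p(2) by force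
  have "(\<Sum>i = 0..<n. int (degree (P $$ (i, p i))) + s (p i))
      < (\<Sum>i = 0..<n. int (degree (P $$ (i, i))) + s i)"
    using is_popov_pivot_row(2)[OF pop car _ pin nz] nz k
          is_popov_pivot_row(3)[OF pop car k(1) pin[OF k(1)] k(2) nz[OF k(1)]]
    by (intro sum_strict_mono_ex1) auto
  moreover have "(\<Sum>i = 0..<n. s (p i)) = (\<Sum>i = 0..<n. s i)"
    using sum.permute[OF p(1), of s] by (simp add: comp_def)
  ultimately have "(\<Sum>i = 0..<n. int (degree (P $$ (i, p i)))) < (\<Sum>i = 0..<n. int (degree (P $$ (i,i))))"
    by (simp add: sum.distrib)
  then have "(\<Sum>i = 0..<n. degree (P $$ (i, p i))) < (\<Sum>i = 0..<n. degree (P $$ (i,i)))"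
    by (simp only: of_nat_sum[symmetric] of_nat_less_iff)
  moreover have "degree (\<Prod>i = 0..<n. P $$ (i, p i)) = (\<Sum>i = 0..<n. degree (P $$ (i, p i)))"
    using nz by (intro degree_prod_eq_sum_degree) auto
  ultimately show ?thesis by simp
qed

lemma is_popov_diag_degree_sum_le:
  assumes pop: "is_popov s P" and car: "P \<in> carrier_mat n n"
  shows "(\<Sum>i = 0..<n. degree (P $$ (i,i))) \<le> degree (det P)"
proof -
  define D where "D = (\<Sum>i = 0..<n. degree (P $$ (i,i)))"
  define f where "f = (\<lambda>p. signof p * (\<Prod>i = 0..<n. P $$ (i, p i)))"
  have "lead_coeff (\<Prod>i = 0..<n. P $$ (i,i)) = 1"
    using pop unfolding lead_coeff_prod is_popov_carrier_iff[OF car] by simp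
  moreover have "degree (\<Prod>i = 0..<n. P $$ (i,i)) = D"
    unfolding D_def using is_popov_pivot_row(1)[OF pop car]
    by (intro degree_prod_eq_sum_degree) auto
  ultimately have id_term: "coeff (f id) D = 1" unfolding f_def by simp
  have other_terms: "coeff (f p) D = 0" if p: "p permutes {0..<n}" "p \<noteq> id" for p
  proof (cases "\<forall>i<n. P $$ (i, p i) \<noteq> 0")
    case True
    have "degree (f p) \<le> degree (\<Prod>i = 0..<n. P $$ (i, p i))"
      unfolding f_def using degree_mult_le[of "signof p :: 'a poly"] by (simp add: degree_of_int)
    with is_popov_perm_term_degree_lt[OF pop car p] True have "degree (f p) < D"
      unfolding D_def by simp
    then show ?thesis by (simp add: coeff_eq_0)
  next
    case False
    then have "(\<Prod>i = 0..<n. P $$ (i, p i)) = 0" by (intro prod_zero) auto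
    then show ?thesis unfolding f_def by (metis mult_zero_right coeff_0)
  qed
  have "coeff (det P) D = (\<Sum>p\<in>{p. p permutes {0..<n}}. coeff (f p) D)"
    unfolding det_def'[OF car] f_def coeff_sum ..
  also have "\<dots> = coeff (f id) D + (\<Sum>p\<in>{p. p permutes {0..<n}} - {id}. coeff (f p) D)"
    by (rule sum.remove) (auto simp: finite_permutations permutes_id)
  also have "\<dots> = 1" using id_term other_terms by simp
  finally show ?thesis unfolding D_def by (intro le_degree) simp
qed

lemma is_popov_offdiag_degree_lt_det:
  assumes pop: "is_popov s P" and car: "P \<in> carrier_mat n n"
    and ij: "i < n" "j < n" "i \<noteq> j" "P $$ (i,j) \<noteq> 0"
  shows "degree (P $$ (i,j)) < degree (det P)"
proof -
  have "degree (P $$ (i,j)) < degree (P $$ (j,j))"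
    using pop ij unfolding is_popov_carrier_iff[OF car] by auto
  also have "\<dots> \<le> (\<Sum>k = 0..<n. degree (P $$ (k,k)))"
    using ij by (intro member_le_sum) auto
  also have "\<dots> \<le> degree (det P)" by (rule is_popov_diag_degree_sum_le[OF pop car])
  finally show ?thesis .
qed

lemma is_popov_change_shift:
  assumes pop: "is_popov s P" and car: "P \<in> carrier_mat n n"
    and compat: "\<And>i j. i < n \<Longrightarrow> j < n \<Longrightarrow> i \<noteq> j \<Longrightarrow> P $$ (i,j) \<noteq> 0 \<Longrightarrow>
                   t j - t i \<le> s j - s i \<or> int (degree (P $$ (i,j))) < t i - t j"
  shows "is_popov t P"
proof -
  have "row_spivot t P i = i" if i: "i < n" for i
  proof -
    have row: "\<exists>j<n. P $$ (i,j) \<noteq> 0" using pop i unfolding is_popov_carrier_iff[OF car] by auto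
    have "int (degree (P $$ (i,j))) + t j \<le> int (degree (P $$ (i,i))) + t i \<and>
          (i < j \<longrightarrow> int (degree (P $$ (i,j))) + t j < int (degree (P $$ (i,i))) + t i)"
      if j: "j < n" "P $$ (i,j) \<noteq> 0" for j
      using is_popov_pivot_row(2)[OF pop car i j] is_popov_pivot_row(3)[OF pop car i j(1) _ j(2)]
            compat[OF i j(1) _ j(2)]
      by (cases "i = j") force+
    then show ?thesis
      using is_popov_pivot_row(1)[OF pop car i] row_spivot_eq_diag_iff[OF car i row] by auto
  qed
  then show ?thesis using pop unfolding is_popov_carrier_iff[OF car] by auto
qed

lemma left_uni_equiv_degree_det:
  assumes "left_uni_equiv P A" and A: "A \<in> carrier_mat m m"
  shows "degree (det P) = degree (det A)"
proof -
  obtain U where U: "U \<in> carrier_mat m m" "is_unit (det U)" and P: "P = U * A"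
    using assms unfolding left_uni_equiv_def unimodular_def by auto
  have "det U \<noteq> 0" "degree (det U) = 0"
    using U(2) is_unit_iff_degree not_is_unit_0 by metis+
  then show ?thesis
    unfolding P det_mult[OF U(1) A] by (cases "det A = 0") (simp_all add: degree_mult_eq)
qed

theorem mainTheorem12:
  fixes A :: "'a::field poly mat" and m \<sigma> :: nat and s :: "nat \<Rightarrow> int" and \<pi> :: "nat \<Rightarrow> nat"
  assumes "A \<in> carrier_mat m m" and "det A \<noteq> 0"
    and "\<sigma> > degree (det A)"
    and "\<pi> permutes {..<m}"
    and "\<forall>i j. i \<le> j \<and> j < m \<longrightarrow> s (\<pi> i) \<le> s (\<pi> j)"
  shows "(\<forall>j<m. tShift s \<pi> \<sigma> j \<ge> 0)
    \<and> (0 < m \<longrightarrow> Min {tShift s \<pi> \<sigma> j | j. j < m} = 0)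
    \<and> (\<forall>j<m. tShift s \<pi> \<sigma> j \<le> (int m - 1) * int \<sigma>)
    \<and> real_of_int (\<Sum>j<m. tShift s \<pi> \<sigma> j) \<le> real m ^ 2 * real \<sigma> / 2
    \<and> (\<forall>P. is_popov s P \<and> left_uni_equiv P A \<longrightarrow> is_popov (tShift s \<pi> \<sigma>) P)"
proof -
  interpret sorting_permutation m s \<pi> using assms(4,5) by unfold_locales
  have "is_popov (tShift s \<pi> \<sigma>) P" if pop: "is_popov s P" and eq: "left_uni_equiv P A" for P
  proof -
    have car: "P \<in> carrier_mat m m"
      using eq assms(1) unfolding left_uni_equiv_def unimodular_def by auto
    have "degree (P $$ (i,j)) < \<sigma>" if "i < m" "j < m" "i \<noteq> j" "P $$ (i,j) \<noteq> 0" for i j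
      using is_popov_offdiag_degree_lt_det[OF pop car that] assms(3)
            left_uni_equiv_degree_det[OF eq assms(1)] by simp
    then show ?thesis
      using tShift_diff_cases by (intro is_popov_change_shift[OF pop car]) force
  qed
  then show ?thesis using tShift_nonneg Min_tShift tShift_le_mult sum_tShift_le by blast
qed

end
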